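(* Let $(f,g)$ be a discrete Ribaucour pair of $(\mathfrak{m}^1,\mathfrak{m}^2)$-type. Then $f$ and $g$ are both spherical curves, i.e. for each of them there is a sphere (possibly a plane) containing all of its points.
   Context: Light cone model: $\mathbb{R}^{4,2}$ with a form $\langle\cdot,\cdot\rangle$ of signature $(4,2)$, light cone $\mathcal{L}$, $\mathbb{P}(\mathcal{L})$; fixed $\mathfrak{p}$ with $\langle\mathfrak{p},\mathfrak{p}\rangle=-1$; $v$ with $\langle\mathfrak{v},\mathfrak{p}\rangle=0$ are points of $\mathbb{R}^3\cup\{\infty\}$, others oriented spheres (planes included); incidence = orthogonality. Inversion in $\mathfrak{a}$: $\sigma_a(x)=x-\frac{2\langle x,\mathfrak{a}\rangle}{\langle\mathfrak{a},\mathfrak{a}\rangle}\mathfrak{a}$; M-inversion if $\mathfrak{a}\perp\mathfrak{p}$; $\sigma_a$ fixes exactly the vectors orthogonal to $\mathfrak{a}$. Discrete curves are maps from consecutive integers to points. A Ribaucour pair $(f,g)$: $f_i,f_j,g_j,g_i$ concircular for each edge $(ij)$; with representatives satisfying $\mathfrak{f}_i-\mathfrak{f}_j+\mathfrak{g}_j-\mathfrak{g}_i=0$ its R-evolution map consists of the M-inversions in $\mathfrak{r}_{ij}=\mathfrak{f}_i-\mathfrak{f}_j$. The pair is of $(\mathfrak{m}^1,\mathfrak{m}^2)$-type if $\mathrm{span}\{\mathfrak{m}^1,\mathfrak{m}^2,\mathfrak{p}\}$ is a 3-dimensional subspace consisting of fixed points of all inversions of the R-evolution map. *)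

theory Defs
  imports "HOL-Analysis.Analysis"
begin

text \<open>The space R^{4,2}: real^6 with the form of signature (4,2),
  coordinates 0..3 positive, coordinates 4,5 negative.\<close>
definition lform :: "real^6 \<Rightarrow> real^6 \<Rightarrow> real" where
  "lform x y = x$0*y$0 + x$1*y$1 + x$2*y$2 + x$3*y$3 - x$4*y$4 - x$5*y$5"

text \<open>Inversion in a (defined when a is not null).\<close>
definition inversion :: "real^6 \<Rightarrow> real^6 \<Rightarrow> real^6" where
  "inversion a x = x - (2 * lform x a / lform a a) *\<^sub>R a"

definition M_inversion :: "real^6 \<Rightarrow> real^6 \<Rightarrow> bool" where
  "M_inversion p a \<longleftrightarrow> lform a a \<noteq> 0 \<and> lform a p = 0"

text \<open>Representatives of elements of P(L): nonzero null vectors.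
  Those orthogonal to p are points, the others oriented spheres (planes included).\<close>
definition is_point :: "real^6 \<Rightarrow> real^6 \<Rightarrow> bool" where
  "is_point p v \<longleftrightarrow> v \<noteq> 0 \<and> lform v v = 0 \<and> lform v p = 0"

definition is_sphere :: "real^6 \<Rightarrow> real^6 \<Rightarrow> bool" where
  "is_sphere p s \<longleftrightarrow> s \<noteq> 0 \<and> lform s s = 0 \<and> lform s p \<noteq> 0"

definition consecutive :: "int set \<Rightarrow> bool" where
  "consecutive I \<longleftrightarrow> (\<forall>i\<in>I. \<forall>j\<in>I. \<forall>k. i \<le> k \<and> k \<le> j \<longrightarrow> k \<in> I)"

definition discrete_curve :: "real^6 \<Rightarrow> int set \<Rightarrow> (int \<Rightarrow> real^6) \<Rightarrow> bool" where
  "discrete_curve p I f \<longleftrightarrow> consecutive I \<and> (\<forall>i\<in>I. is_point p (f i))"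

definition concircular :: "real^6 \<Rightarrow> real^6 \<Rightarrow> real^6 \<Rightarrow> real^6 \<Rightarrow> bool" where
  "concircular a b c d \<longleftrightarrow> dim (span {a, b, c, d}) \<le> 3"

text \<open>Ribaucour pair given by representatives normalised so that
  f_i - f_j + g_j - g_i = 0 on every edge (i, i+1); its R-evolution map consists of
  the M-inversions in r_ij = f_i - f_j.\<close>
definition ribaucour_pair :: "real^6 \<Rightarrow> int set \<Rightarrow> (int \<Rightarrow> real^6) \<Rightarrow> (int \<Rightarrow> real^6) \<Rightarrow> bool" where
  "ribaucour_pair p I f g \<longleftrightarrow> discrete_curve p I f \<and> discrete_curve p I g \<and>
     (\<forall>i. i \<in> I \<and> i + 1 \<in> I \<longrightarrow>
        concircular (f i) (f (i+1)) (g (i+1)) (g i) \<and>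
        f i - f (i+1) + g (i+1) - g i = 0 \<and>
        M_inversion p (f i - f (i+1)))"

definition of_type :: "real^6 \<Rightarrow> int set \<Rightarrow> (int \<Rightarrow> real^6) \<Rightarrow> (int \<Rightarrow> real^6)
    \<Rightarrow> real^6 \<Rightarrow> real^6 \<Rightarrow> bool" where
  "of_type p I f g m1 m2 \<longleftrightarrow> dim (span {m1, m2, p}) = 3 \<and>
     (\<forall>i. i \<in> I \<and> i + 1 \<in> I \<longrightarrow>
        (\<forall>x\<in>span {m1, m2, p}. inversion (f i - f (i+1)) x = x))"

definition spherical :: "real^6 \<Rightarrow> int set \<Rightarrow> (int \<Rightarrow> real^6) \<Rightarrow> bool" where
  "spherical p I f \<longleftrightarrow> (\<exists>s. is_sphere p s \<and> (\<forall>i\<in>I. lform (f i) s = 0))"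

end

theory Submission
  imports Defs
begin

text \<open>All inversions of the R-evolution map fix the 3-dimensional space
  span {m1, m2, p}, so every edge f i - f (i + 1) is orthogonal to it. Inside this space
  there is a nonzero k orthogonal to p and to one point f a; then lform (f i) k is constant
  along the curve, hence zero. Since an edge is not null, f a and f (a + 1) are not
  orthogonal, and p together with a suitable combination of them spans a negative
  definite plane orthogonal to k; signature (4,2) forces k to be spacelike. Normalising
  k and adding p gives a sphere through all points. Since g has the same edges as f,
  the same argument applies to g.\<close>

lemma UNIV_6: "(UNIV :: 6 set) = {0, 1, 2, 3, 4, 5}"
proof -
  have "x \<in> {0, 1, 2, 3, 4, 5}" for x :: 6
  proof (induct x)
    case (of_int z)
    then have "z \<in> {0, 1, 2, 3, 4, 5}" by fastforce
    then show ?case by auto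
  qed
  then show ?thesis by blast
qed

lemma lform_eq_inner: "lform x y = x \<bullet> y - 2 * (x$4 * y$4 + x$5 * y$5)"
  unfolding lform_def inner_vec_def UNIV_6 by simp

lemma lform_sym: "lform x y = lform y x"
  by (simp add: lform_def algebra_simps)

lemma lform_add_left [simp]: "lform (x + y) z = lform x z + lform y z"
  and lform_add_right [simp]: "lform z (x + y) = lform z x + lform z y"
  and lform_diff_left [simp]: "lform (x - y) z = lform x z - lform y z"
  and lform_diff_right [simp]: "lform z (x - y) = lform z x - lform z y"
  and lform_scaleR_left [simp]: "lform (c *\<^sub>R x) z = c * lform x z"
  and lform_scaleR_right [simp]: "lform z (c *\<^sub>R x) = c * lform z x"
  and lform_zero_left [simp]: "lform 0 z = 0"
  and lform_zero_right [simp]: "lform z 0 = 0"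
  by (simp_all add: lform_def algebra_simps)

lemma lform_self_pos:
  assumes "x$4 = 0" and "x$5 = 0" and "x \<noteq> 0"
  shows "lform x x > 0"
  using assms by (simp add: lform_eq_inner)

lemma exists_nonzero_in_kernel:
  fixes f :: "'a::euclidean_space \<Rightarrow> 'b::euclidean_space"
  assumes "linear f" and "DIM('b) < dim S"
  obtains x where "x \<in> span S" and "x \<noteq> 0" and "f x = 0"
proof -
  have "\<not> inj_on f (span S)"
  proof
    assume "inj_on f (span S)"
    then have "dim (f ` S) = dim S"
      by (rule dim_image_eq[OF assms(1)])
    with dim_subset_UNIV[of "f ` S"] assms(2) show False by simp
  qed
  then show ?thesis
    using linear_inj_on_iff_eq_0[OF assms(1) subspace_span] that by blast
qed

text \<open>Some nonzero combination of x, y, k lies in the positive definite subspace where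
  coordinates 4 and 5 vanish; this is impossible unless k is spacelike.\<close>
lemma lform_pos_if_orthogonal_to_negative_plane:
  assumes xx: "lform x x < 0" and yy: "lform y y < 0" and xy: "lform x y = 0"
    and kx: "lform k x = 0" and ky: "lform k y = 0" and "k \<noteq> 0"
  shows "lform k k > 0"
proof (rule ccontr)
  assume "\<not> lform k k > 0"
  then have kk: "lform k k \<le> 0" by simp
  define comb :: "real \<times> real \<times> real \<Rightarrow> real^6"
    where "comb = (\<lambda>(a, b, c). a *\<^sub>R x + b *\<^sub>R y + c *\<^sub>R k)"
  have "linear (\<lambda>v. ((comb v)$4, (comb v)$5))"
    by (rule linearI) (auto simp: comb_def algebra_simps)
  moreover have "DIM(real \<times> real) < dim (UNIV :: (real \<times> real \<times> real) set)"
    by simp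
  ultimately obtain v where "v \<noteq> 0" and "((comb v)$4, (comb v)$5) = 0"
    using exists_nonzero_in_kernel by blast
  then have "v \<noteq> 0" and w45: "(comb v)$4 = 0" "(comb v)$5 = 0"
    by (simp_all add: zero_prod_def)
  then obtain a b c where v: "v = (a, b, c)" and abc: "a \<noteq> 0 \<or> b \<noteq> 0 \<or> c \<noteq> 0"
    by (cases v) (auto simp: zero_prod_def)
  define w where "w = comb v"
  have "lform w w = a * a * lform x x + b * b * lform y y + c * c * lform k k"
    using xy kx ky by (simp add: w_def comb_def v lform_sym[of y x] lform_sym[of x k]
        lform_sym[of y k] algebra_simps)
  also have "\<dots> \<le> 0"
    using xx yy kk by (intro add_nonpos_nonpos mult_nonneg_nonpos) auto
  finally have "w = 0"
    using lform_self_pos[of w] w45 by (force simp: w_def)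
  then have "lform w x = 0" and "lform w y = 0" by simp_all
  then have "a = 0" and "b = 0"
    using xx yy xy kx ky by (simp_all add: w_def comb_def v lform_sym[of y x])
  with \<open>w = 0\<close> have "c *\<^sub>R k = 0" by (simp add: w_def comb_def v)
  then show False
    using abc \<open>a = 0\<close> \<open>b = 0\<close> \<open>k \<noteq> 0\<close> by simp
qed

lemma spherical_if_orthogonal_to_spacelike:
  assumes pp: "lform p p < 0" and kk: "lform k k > 0" and kp: "lform k p = 0"
    and on_k: "\<forall>i\<in>I. lform (h i) k = 0 \<and> lform (h i) p = 0"
  shows "spherical p I h"
proof -
  define c where "c = sqrt (- lform p p / lform k k)"
  define s where "s = c *\<^sub>R k + p"
  have "c * c * lform k k = - lform p p"
    using pp kk by (simp add: c_def)
  then have "lform s s = 0"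
    using kp by (simp add: s_def lform_sym[of p k])
  moreover have "lform s p \<noteq> 0"
    using pp kp by (simp add: s_def)
  ultimately have "is_sphere p s"
    by (auto simp: is_sphere_def)
  moreover have "\<forall>i\<in>I. lform (h i) s = 0"
    using on_k by (simp add: s_def)
  ultimately show ?thesis
    unfolding spherical_def by blast
qed

lemma spherical_if_subsingleton:
  assumes "lform p p < 0" and "I \<subseteq> {a}" and "\<forall>i\<in>I. lform (h i) p = 0"
  shows "spherical p I h"
proof -
  have "linear (\<lambda>k. (lform k p, lform k (h a), k$4, k$5))"
    by (rule linearI) simp_all
  moreover have "DIM(real \<times> real \<times> real \<times> real) < dim (UNIV :: (real^6) set)"
    by simp
  ultimately obtain k where "k \<noteq> 0" and "(lform k p, lform k (h a), k$4, k$5) = 0"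
    using exists_nonzero_in_kernel by blast
  then have "k \<noteq> 0" "lform k p = 0" "lform (h a) k = 0" "k$4 = 0" "k$5 = 0"
    by (simp_all add: zero_prod_def lform_sym)
  then show ?thesis
    using assms lform_self_pos spherical_if_orthogonal_to_spacelike[of p k I h] by auto
qed

lemma consecutiveD:
  "consecutive I \<Longrightarrow> i \<in> I \<Longrightarrow> j \<in> I \<Longrightarrow> i \<le> k \<Longrightarrow> k \<le> j \<Longrightarrow> k \<in> I"
  unfolding consecutive_def by blast

lemma consecutive_subsingleton:
  assumes "consecutive I" and "\<And>i. i \<in> I \<Longrightarrow> i + 1 \<notin> I"
  obtains a where "I \<subseteq> {a}"
proof (cases "I = {}")
  case True
  then show ?thesis
    using that by blast
next
  case False
  then obtain a where a: "a \<in> I" by blast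
  have "j = a" if j: "j \<in> I" for j
  proof (rule ccontr)
    assume "j \<noteq> a"
    then consider "j < a" | "a < j" by linarith
    then show False
    proof cases
      case 1
      then have "j + 1 \<in> I" using consecutiveD[OF assms(1) j a, of "j + 1"] by simp
      then show False using assms(2) j by blast
    next
      case 2
      then have "a + 1 \<in> I" using consecutiveD[OF assms(1) a j, of "a + 1"] by simp
      then show False using assms(2) a by blast
    qed
  qed
  then have "I \<subseteq> {a}" by blast
  then show ?thesis by (rule that)
qed

lemma consecutive_const:
  assumes I: "consecutive I" and neighbours: "\<And>i. i \<in> I \<Longrightarrow> i + 1 \<in> I \<Longrightarrow> h (i + 1) = h i"
    and "a \<in> I" and "b \<in> I"
  shows "h a = h b"
proof -
  have upward: "h j = h i" if i: "i \<in> I" and j: "j \<in> I" and "i \<le> j" for i j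
  proof -
    have "l \<le> j \<longrightarrow> h l = h i" if "i \<le> l" for l
      using that
    proof (induction l rule: int_ge_induct)
      case (step l)
      show ?case
      proof
        assume "l + 1 \<le> j"
        then have "h (l + 1) = h l"
          using neighbours consecutiveD[OF I i j] step.hyps by simp
        then show "h (l + 1) = h i"
          using step.IH \<open>l + 1 \<le> j\<close> by simp
      qed
    qed simp
    from this[of j] \<open>i \<le> j\<close> show ?thesis by simp
  qed
  show ?thesis
  proof (cases "a \<le> b")
    case True
    then show ?thesis using upward[OF assms(3,4)] by simp
  next
    case False
    then show ?thesis using upward[OF assms(4,3)] by simp
  qed
qed

lemma inversion_fixed_iff:
  assumes "lform a a \<noteq> 0"
  shows "inversion a x = x \<longleftrightarrow> lform x a = 0"
proof -
  have "a \<noteq> 0"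
    using assms by auto
  then show ?thesis
    using assms by (simp add: inversion_def)
qed

lemma spherical_if_edges_orthogonal_to_subspace:
  assumes pp: "lform p p < 0" and I: "consecutive I"
    and points: "\<And>i. i \<in> I \<Longrightarrow> is_point p (h i)"
    and dim_M: "3 \<le> dim M"
    and nonnull: "\<And>i. i \<in> I \<Longrightarrow> i + 1 \<in> I \<Longrightarrow> lform (h i - h (i + 1)) (h i - h (i + 1)) \<noteq> 0"
    and orth: "\<And>i x. i \<in> I \<Longrightarrow> i + 1 \<in> I \<Longrightarrow> x \<in> span M \<Longrightarrow> lform x (h i - h (i + 1)) = 0"
  shows "spherical p I h"
proof (cases "\<exists>a. a \<in> I \<and> a + 1 \<in> I")
  case False
  then obtain a where "I \<subseteq> {a}"
    using consecutive_subsingleton[OF I] by blast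
  moreover have "\<forall>i\<in>I. lform (h i) p = 0"
    using points by (simp add: is_point_def)
  ultimately show ?thesis
    by (rule spherical_if_subsingleton[OF pp])
next
  case True
  then obtain a where a: "a \<in> I" "a + 1 \<in> I" by blast
  define u v where "u = h a" and "v = h (a + 1)"
  have "linear (\<lambda>k. (lform k p, lform u k))"
    by (rule linearI) simp_all
  moreover have "DIM(real \<times> real) < dim M"
    using dim_M by simp
  ultimately obtain k where k: "k \<in> span M" "k \<noteq> 0" and "(lform k p, lform u k) = 0"
    using exists_nonzero_in_kernel by blast
  then have kp: "lform k p = 0" and ku: "lform u k = 0"
    by (simp_all add: zero_prod_def)
  have on_k: "lform (h j) k = 0" if "j \<in> I" for j
  proof -
    have "lform (h (i + 1)) k = lform (h i) k" if "i \<in> I" "i + 1 \<in> I" for i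
      using orth[OF that k(1)] by (simp add: lform_sym[of k "h i"] lform_sym[of k "h (i + 1)"])
    then have "lform (h j) k = lform (h a) k"
      using consecutive_const[where h = "\<lambda>i. lform (h i) k", OF I _ that a(1)] by blast
    with ku show ?thesis
      by (simp add: u_def)
  qed
  have uu: "lform u u = 0" and vv: "lform v v = 0" and up: "lform u p = 0" and vp: "lform v p = 0"
    using points[OF a(1)] points[OF a(2)] by (simp_all add: u_def v_def is_point_def)
  have "lform (u - v) (u - v) = - 2 * lform u v"
    using uu vv by (simp add: lform_sym[of v u])
  then have uv: "lform u v \<noteq> 0"
    using nonnull[OF a] by (simp add: u_def v_def)
  text \<open>Together with p, the vector t spans a negative definite plane orthogonal to k.\<close>
  define t where "t = u - lform u v *\<^sub>R v"
  have "lform t t = - 2 * (lform u v)\<^sup>2"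
    using uu vv by (simp add: t_def lform_sym[of v u] power2_eq_square)
  then have tt: "lform t t < 0"
    using uv by simp
  have "lform k k > 0"
  proof (rule lform_pos_if_orthogonal_to_negative_plane[OF tt pp])
    show "lform t p = 0"
      using up vp by (simp add: t_def)
    show "lform k t = 0"
      using ku on_k[OF a(2)] by (simp add: t_def v_def lform_sym[of k u] lform_sym[of k "h (a + 1)"])
  qed (fact kp k(2))+
  moreover have "\<forall>i\<in>I. lform (h i) k = 0 \<and> lform (h i) p = 0"
    using on_k points by (simp add: is_point_def)
  ultimately show ?thesis
    by (rule spherical_if_orthogonal_to_spacelike[OF pp _ kp])
qed

lemma ribaucour_pair_edges:
  assumes "ribaucour_pair p I f g" and "i \<in> I" and "i + 1 \<in> I"
  shows "g i - g (i + 1) = f i - f (i + 1)"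
proof -
  have "f i - f (i + 1) + g (i + 1) - g i = 0"
    using assms unfolding ribaucour_pair_def by blast
  then show ?thesis
    by (simp add: algebra_simps)
qed

lemma ribaucour_pair_swap:
  assumes "ribaucour_pair p I f g"
  shows "ribaucour_pair p I g f"
proof -
  have "{g i, g (i + 1), f (i + 1), f i} = {f i, f (i + 1), g (i + 1), g i}" for i
    by auto
  then show ?thesis
    using assms ribaucour_pair_edges[OF assms] unfolding ribaucour_pair_def concircular_def
    by auto
qed

lemma of_type_swap:
  assumes "ribaucour_pair p I f g" and "of_type p I f g m1 m2"
  shows "of_type p I g f m1 m2"
  using assms(2) ribaucour_pair_edges[OF assms(1)] unfolding of_type_def by simp

lemma spherical_if_of_type:
  assumes pp: "lform p p < 0"
    and pair: "ribaucour_pair p I f g" and type: "of_type p I f g m1 m2"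
  shows "spherical p I f"
proof (rule spherical_if_edges_orthogonal_to_subspace[where M = "{m1, m2, p}", OF pp])
  show "consecutive I" and "\<And>i. i \<in> I \<Longrightarrow> is_point p (f i)"
    using pair unfolding ribaucour_pair_def discrete_curve_def by blast+
  have "dim (span {m1, m2, p}) = 3"
    using type unfolding of_type_def by blast
  then show "3 \<le> dim {m1, m2, p}"
    by simp
  show nonnull: "lform (f i - f (i + 1)) (f i - f (i + 1)) \<noteq> 0" if "i \<in> I" "i + 1 \<in> I" for i
    using pair that unfolding ribaucour_pair_def M_inversion_def by blast
  show "lform x (f i - f (i + 1)) = 0"
    if "i \<in> I" "i + 1 \<in> I" "x \<in> span {m1, m2, p}" for i x
    using type that inversion_fixed_iff[OF nonnull[OF that(1,2)]] unfolding of_type_def by blast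
qed

theorem corollary2p5:
  fixes p m1 m2 :: "real^6" and I :: "int set" and f g :: "int \<Rightarrow> real^6"
  assumes "lform p p = -1"
    and "ribaucour_pair p I f g"
    and "of_type p I f g m1 m2"
  shows "spherical p I f \<and> spherical p I g"
proof
  have pp: "lform p p < 0"
    using assms(1) by simp
  show "spherical p I f"
    using spherical_if_of_type[OF pp assms(2,3)] .
  have "ribaucour_pair p I g f" and "of_type p I g f m1 m2"
    using ribaucour_pair_swap of_type_swap assms(2,3) by blast+
  then show "spherical p I g"
    by (rule spherical_if_of_type[OF pp])
qed

end
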